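(* There exists $0<\eta\le 1$ such that, for each sufficiently large integer $k$, there exists a pair $(p_k,q_k)$ of homogeneous polynomials of degree $k$ in two complex variables such that the map $(p_k,q_k):\mathbb{C}^2\to\mathbb{C}^2$ takes the unit sphere $S^3\subset\mathbb{C}^2$ into the annulus $\{w\in\mathbb{C}^2:\sqrt{\eta}\le |w|\le 1\}$. *)

theory Defs
  imports Complex_Main
begin

definition hom_poly2 :: "nat \<Rightarrow> (complex \<Rightarrow> complex \<Rightarrow> complex) \<Rightarrow> bool" where
  "hom_poly2 k P \<longleftrightarrow> (\<exists>a :: nat \<Rightarrow> complex. \<forall>z1 z2. P z1 z2 = (\<Sum>j\<le>k. a j * z1 ^ j * z2 ^ (k - j)))"

definition norm2 :: "complex \<Rightarrow> complex \<Rightarrow> real" where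
  "norm2 z1 z2 = sqrt ((cmod z1)\<^sup>2 + (cmod z2)\<^sup>2)"

end

theory Submission
  imports Defs
begin

text \<open>
  Write a point of the unit sphere as \<open>|z1| = sin \<phi>\<close>, \<open>|z2| = cos \<phi>\<close> with \<open>\<phi> \<in> [0, pi/2]\<close>.
  If \<open>k sin\<^sup>2 \<theta> = j\<close>, the modulus of \<open>z1^j z2^(k-j)\<close> is maximal at \<open>\<phi> = \<theta>\<close>; divided by this
  maximum it is at most \<open>cos (\<theta> - \<phi>)^k \<le> exp (-k (\<theta> - \<phi>)\<^sup>2 / 3)\<close> (weighted AM-GM), and at least
  \<open>exp (-2 k (\<theta> - \<phi>)\<^sup>2)\<close> when \<open>\<theta>\<close> is comparable to \<open>\<phi>\<close> at both ends of the quarter circle.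
  Take peak angles \<open>\<theta>\<^sub>i\<close> with \<open>k sin\<^sup>2 \<theta>\<^sub>i\<close> integral within \<open>\<delta>/20\<close> of the grid \<open>i \<delta>\<close>,
  \<open>\<delta> = pi / (2 M)\<close> of order \<open>1/\<surd>k\<close>, and let \<open>p\<close> and \<open>q\<close> be the sums of the normalized monomials
  of even and of odd index. The Gaussian bounds make the sum of all terms \<open>O(1)\<close>, while at every
  point the term whose peak is nearest to \<open>\<phi>\<close> dominates the other terms of its parity, which peak
  at least about \<open>2\<delta>\<close> away. Hence \<open>|p|\<^sup>2 + |q|\<^sup>2\<close> lies between two positive constants independent of \<open>k\<close>.
\<close>

lemma cos_ge_one_minus_sq_half: "1 - x\<^sup>2 / 2 \<le> cos (x::real)"
proof -
  have "1 - y\<^sup>2 / 2 \<le> cos y" if "0 \<le> y" for y :: real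
  proof -
    let ?f = "\<lambda>x::real. cos x - 1 + x\<^sup>2 / 2"
    have "?f 0 \<le> ?f y"
    proof (rule DERIV_nonneg_imp_nondecreasing[OF that])
      fix u :: real
      assume "0 \<le> u"
      have "(?f has_real_derivative u - sin u) (at u)"
        by (auto intro!: derivative_eq_intros)
      then show "\<exists>d. (?f has_real_derivative d) (at u) \<and> 0 \<le> d"
        using sin_x_le_x[OF \<open>0 \<le> u\<close>] by auto
    qed
    then show ?thesis by simp
  qed
  from this[of x] this[of "-x"] show ?thesis
    by (cases "0 \<le> x") auto
qed

lemma sin_ge_sub_cube_sixth:
  assumes "0 \<le> x"
  shows "x - x ^ 3 / 6 \<le> sin (x::real)"
proof -
  let ?f = "\<lambda>x::real. sin x - x + x ^ 3 / 6"
  have "?f 0 \<le> ?f x"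
  proof (rule DERIV_nonneg_imp_nondecreasing[OF assms])
    fix u :: real
    have "(?f has_real_derivative cos u - 1 + u\<^sup>2 / 2) (at u)"
      by (auto intro!: derivative_eq_intros simp: power2_eq_square)
    then show "\<exists>d. (?f has_real_derivative d) (at u) \<and> 0 \<le> d"
      using cos_ge_one_minus_sq_half[of u] by auto
  qed
  then show ?thesis by simp
qed

lemma cos_le_taylor_4: "cos x \<le> 1 - x\<^sup>2 / 2 + x ^ 4 / 24" for x :: real
proof -
  have "cos y \<le> 1 - y\<^sup>2 / 2 + y ^ 4 / 24" if "0 \<le> y" for y :: real
  proof -
    let ?f = "\<lambda>x::real. 1 - x\<^sup>2 / 2 + x ^ 4 / 24 - cos x"
    have "?f 0 \<le> ?f y"
    proof (rule DERIV_nonneg_imp_nondecreasing[OF that])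
      fix u :: real
      assume "0 \<le> u"
      have "(?f has_real_derivative sin u - (u - u ^ 3 / 6)) (at u)"
        by (auto intro!: derivative_eq_intros simp: power2_eq_square)
      then show "\<exists>d. (?f has_real_derivative d) (at u) \<and> 0 \<le> d"
        using sin_ge_sub_cube_sixth[OF \<open>0 \<le> u\<close>] by auto
    qed
    then show ?thesis by simp
  qed
  from this[of x] this[of "-x"] show ?thesis
    by (cases "0 \<le> x") auto
qed

lemma cos_le_one_minus_sq_third:
  fixes x :: real
  assumes "\<bar>x\<bar> \<le> 2"
  shows "cos x \<le> 1 - x\<^sup>2 / 3"
proof -
  have "x\<^sup>2 \<le> 4"
    using assms abs_le_square_iff[of x 2] by simp
  then have "x\<^sup>2 * x\<^sup>2 \<le> x\<^sup>2 * 4"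
    by (intro mult_left_mono) auto
  then have "x ^ 4 / 24 \<le> x\<^sup>2 / 6"
    by (simp add: power4_eq_xxxx power2_eq_square)
  then show ?thesis
    using cos_le_taylor_4[of x] by linarith
qed

lemma x_le_three_sin_x:
  fixes x :: real
  assumes "0 \<le> x" "x \<le> 2"
  shows "x \<le> 3 * sin x"
proof -
  have "x\<^sup>2 \<le> 2\<^sup>2"
    using assms by (intro power_mono) auto
  then have "x * x\<^sup>2 \<le> x * 4"
    using assms by (intro mult_left_mono) auto
  then show ?thesis
    using sin_ge_sub_cube_sixth[OF assms(1)] by (simp add: power3_eq_cube power2_eq_square)
qed

lemma sin_triple: "sin (3 * a) = 3 * sin a - 4 * sin a ^ 3" for a :: real
proof -
  have "sin (3 * a) = sin (2 * a + a)" by simp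
  also have "\<dots> = sin (2 * a) * cos a + cos (2 * a) * sin a"
    by (rule sin_add)
  also have "\<dots> = 2 * sin a * (cos a)\<^sup>2 + (1 - 2 * (sin a)\<^sup>2) * sin a"
    by (simp add: sin_double cos_double_sin power2_eq_square)
  also have "\<dots> = 3 * sin a - 4 * sin a ^ 3"
    unfolding cos_squared_eq by (simp add: power2_eq_square power3_eq_cube algebra_simps)
  finally show ?thesis .
qed

lemma sin_le_three_sin:
  fixes x y :: real
  assumes "0 \<le> x" "x \<le> 3 * y" "y \<le> pi / 2"
  shows "sin x \<le> 3 * sin y"
proof -
  have "0 \<le> sin (x / 3)"
    using assms by (intro sin_ge_zero) auto
  then have "sin x \<le> 3 * sin (x / 3)"
    using sin_triple[of "x / 3"] by simp
  also have "sin (x / 3) \<le> sin y"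
    using assms by (intro sin_monotone_2pi_le) auto
  finally show ?thesis by simp
qed

lemma sin_diff_sq_le_sin_sq_diff:
  fixes a b :: real
  assumes "0 \<le> a" "a \<le> b" "b \<le> pi / 2"
  shows "(sin (b - a))\<^sup>2 \<le> (sin b)\<^sup>2 - (sin a)\<^sup>2"
proof -
  have "sin (b + a) * sin (b - a) = (sin b)\<^sup>2 * (cos a)\<^sup>2 - (cos b)\<^sup>2 * (sin a)\<^sup>2"
    unfolding sin_add sin_diff by (simp add: power2_eq_square algebra_simps)
  also have "\<dots> = (sin b)\<^sup>2 - (sin a)\<^sup>2"
    by (simp add: cos_squared_eq algebra_simps)
  finally have diff: "(sin b)\<^sup>2 - (sin a)\<^sup>2 = sin (b + a) * sin (b - a)" ..
  have "sin (b + a) - sin (b - a) = 2 * cos b * sin a"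
    by (simp add: sin_add sin_diff)
  moreover have "0 \<le> cos b" "0 \<le> sin a"
    using assms by (auto intro!: cos_ge_zero sin_ge_zero)
  then have "0 \<le> cos b * sin a"
    by simp
  ultimately have "sin (b - a) \<le> sin (b + a)"
    by linarith
  moreover have "0 \<le> sin (b - a)"
    using assms by (intro sin_ge_zero) auto
  ultimately show ?thesis
    unfolding diff by (simp add: power2_eq_square mult_right_mono)
qed

lemma ln_ge_quadratic:
  fixes m x :: real
  assumes "0 < m" "m \<le> 1" "m \<le> x"
  shows "x - 1 - (x - 1)\<^sup>2 / (2 * m) \<le> ln x"
proof -
  let ?g = "\<lambda>x::real. ln x - (x - 1) + (x - 1)\<^sup>2 / (2 * m)"
  have deriv: "(?g has_real_derivative (x - 1) * (1 / m - 1 / x)) (at x)" if "m \<le> x" for x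
  proof -
    have "0 < x" using that assms by linarith
    then have "(?g has_real_derivative 1 / x - 1 + 2 * (x - 1) / (2 * m)) (at x)"
      using assms by (auto intro!: derivative_eq_intros simp: field_simps)
    moreover have "1 / x - 1 + 2 * (x - 1) / (2 * m) = (x - 1) * (1 / m - 1 / x)"
      using \<open>0 < x\<close> assms by (simp add: field_simps)
    ultimately show ?thesis by simp
  qed
  have inv_le: "1 / y \<le> 1 / m" if "m \<le> y" for y :: real
    using that assms by (intro divide_left_mono) auto
  have "?g 1 \<le> ?g x"
  proof (cases "1 \<le> x")
    case True
    show ?thesis
    proof (rule DERIV_nonneg_imp_nondecreasing[OF True])
      fix y :: real assume "1 \<le> y"
      with assms have "m \<le> y" by linarith
      then show "\<exists>d. (?g has_real_derivative d) (at y) \<and> 0 \<le> d"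
        using deriv inv_le \<open>1 \<le> y\<close> by (intro exI conjI) auto
    qed
  next
    case False
    show ?thesis
    proof (rule DERIV_nonpos_imp_nonincreasing[of x 1 ?g])
      fix y :: real assume "x \<le> y" "y \<le> 1"
      with assms have "m \<le> y" by linarith
      then show "\<exists>d. (?g has_real_derivative d) (at y) \<and> d \<le> 0"
        using deriv inv_le \<open>y \<le> 1\<close> by (intro exI conjI) (auto simp: mult_nonpos_nonneg)
    qed (use False in auto)
  qed
  then show ?thesis by simp
qed

lemma arith_geom_mean_weighted:
  fixes x y :: real
  assumes "0 \<le> x" "0 \<le> y" "j \<le> k"
  shows "x ^ j * y ^ (k - j) \<le> ((real j * x + real (k - j) * y) / real k) ^ k"
proof (cases "k = 0")
  case False
  define A where "A = (real j * x + real (k - j) * y) / real k"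
  have "0 \<le> A"
    using assms by (simp add: A_def)
  show ?thesis
  proof (cases "A = 0")
    case True
    then have "j * x = 0" "(k - j) * y = 0"
      using assms False by (auto simp: A_def add_nonneg_eq_0_iff)
    then have "x ^ j * y ^ (k - j) = 0"
      using \<open>k \<noteq> 0\<close> assms(3) by (cases "j = 0") auto
    moreover have "A ^ k = 0"
      using True \<open>k \<noteq> 0\<close> by simp
    ultimately show ?thesis
      unfolding A_def[symmetric] by linarith
  next
    case False
    with \<open>0 \<le> A\<close> have "0 < A" by simp
    have exp_bound: "(u / A) ^ n \<le> exp (n * (u / A - 1))" if "0 \<le> u" for u n
    proof -
      have "(u / A) ^ n \<le> exp (u / A - 1) ^ n"
        using that \<open>0 < A\<close> exp_ge_add_one_self[of "u / A - 1"] by (intro power_mono) auto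
      then show ?thesis by (simp add: exp_of_nat_mult)
    qed
    have "x ^ j * y ^ (k - j) = A ^ k * ((x / A) ^ j * (y / A) ^ (k - j))"
      using \<open>0 < A\<close> assms(3) by (simp add: power_divide power_add[symmetric])
    also have "(x / A) ^ j * (y / A) ^ (k - j) \<le> exp (j * (x / A - 1)) * exp ((k - j) * (y / A - 1))"
      using assms \<open>0 < A\<close> by (intro mult_mono exp_bound) auto
    also have "\<dots> = 1"
      using \<open>0 < A\<close> \<open>k \<noteq> 0\<close> assms(3)
      by (simp add: exp_add[symmetric] A_def of_nat_diff field_simps)
    finally show ?thesis
      using \<open>0 < A\<close> by (simp add: A_def)
  qed
qed (use assms in simp)

section \<open>Monomials on the unit sphere\<close>

definition sin_cos_monomial :: "nat \<Rightarrow> nat \<Rightarrow> real \<Rightarrow> real" where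
  "sin_cos_monomial k j \<theta> = sin \<theta> ^ j * cos \<theta> ^ (k - j)"

lemma
  assumes "0 \<le> \<theta>" "\<theta> \<le> pi / 2" "real k * (sin \<theta>)\<^sup>2 = real j"
  shows exponent_le_degree: "j \<le> k"
    and cos_sq_eq_exponent: "real k * (cos \<theta>)\<^sup>2 = real (k - j)"
    and sin_cos_monomial_pos: "0 < sin_cos_monomial k j \<theta>"
proof -
  have "(sin \<theta>)\<^sup>2 \<le> 1"
    using sin_squared_eq[of \<theta>] zero_le_power2[of "cos \<theta>"] by linarith
  then have "real j \<le> real k"
    using assms(3) mult_left_le[of "(sin \<theta>)\<^sup>2" "real k"] by simp
  then show "j \<le> k" by simp
  then show "real k * (cos \<theta>)\<^sup>2 = real (k - j)"
    using assms(3) by (simp add: cos_squared_eq of_nat_diff right_diff_distrib)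
  have "0 \<le> sin \<theta>" "0 \<le> cos \<theta>"
    using assms by (auto intro!: sin_ge_zero cos_ge_zero)
  moreover have "sin \<theta> \<noteq> 0" if "j \<noteq> 0"
    using that assms(3) by auto
  moreover have "cos \<theta> \<noteq> 0" if "j \<noteq> k"
    using that assms(3) by (auto simp: sin_squared_eq)
  ultimately show "0 < sin_cos_monomial k j \<theta>"
    unfolding sin_cos_monomial_def
    by (metis diff_self_eq_0 less_eq_real_def mult_pos_pos power_0 zero_less_one zero_less_power)
qed

lemma sin_cos_monomial_le_cos_diff_power:
  assumes "0 \<le> \<theta>" "\<theta> \<le> pi / 2" "0 \<le> \<phi>" "\<phi> \<le> pi / 2" "real k * (sin \<theta>)\<^sup>2 = real j"
  shows "sin_cos_monomial k j \<phi> \<le> sin_cos_monomial k j \<theta> * cos (\<theta> - \<phi>) ^ k"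
proof -
  define \<sigma> \<tau> where "\<sigma> = sin \<theta>" and "\<tau> = cos \<theta>"
  have "0 \<le> \<sigma>" "0 \<le> \<tau>" "0 \<le> sin \<phi>" "0 \<le> cos \<phi>"
    using assms by (auto simp: \<sigma>_def \<tau>_def intro!: sin_ge_zero cos_ge_zero)
  have "j \<le> k" and kj: "real k * \<sigma>\<^sup>2 = real j" and kj': "real k * \<tau>\<^sup>2 = real (k - j)"
    using exponent_le_degree[OF assms(1,2,5)] cos_sq_eq_exponent[OF assms(1,2,5)] assms(5)
    by (auto simp: \<sigma>_def \<tau>_def)
  have cos_diff_eq: "cos (\<theta> - \<phi>) = \<sigma> * sin \<phi> + \<tau> * cos \<phi>"
    by (simp add: \<sigma>_def \<tau>_def cos_diff)
  consider "k = 0" | "\<sigma> = 0" | "\<tau> = 0" | "k \<noteq> 0" "0 < \<sigma>" "0 < \<tau>"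
    using \<open>0 \<le> \<sigma>\<close> \<open>0 \<le> \<tau>\<close> by fastforce
  then show ?thesis
  proof cases
    case 1
    with \<open>j \<le> k\<close> show ?thesis by (simp add: sin_cos_monomial_def)
  next
    case 2
    then have "j = 0" "\<tau> = 1"
      using kj \<open>0 \<le> \<tau>\<close> sin_cos_squared_add[of \<theta>] by (auto simp: \<sigma>_def \<tau>_def power2_eq_1_iff)
    then show ?thesis
      using 2 by (simp add: sin_cos_monomial_def cos_diff_eq flip: \<sigma>_def \<tau>_def)
  next
    case 3
    then have "j = k" "\<sigma> = 1"
      using kj kj' \<open>0 \<le> \<sigma>\<close> sin_cos_squared_add[of \<theta>]
      by (auto simp: \<sigma>_def \<tau>_def power2_eq_1_iff)
    then show ?thesis
      using 3 by (simp add: sin_cos_monomial_def cos_diff_eq flip: \<sigma>_def \<tau>_def)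
  next
    case 4
    define x y where "x = sin \<phi> / \<sigma>" and "y = cos \<phi> / \<tau>"
    have "(real j * x + real (k - j) * y) / real k = cos (\<theta> - \<phi>)"
      using 4 unfolding cos_diff_eq x_def y_def kj[symmetric] kj'[symmetric]
      by (simp add: power2_eq_square field_simps)
    then have "x ^ j * y ^ (k - j) \<le> cos (\<theta> - \<phi>) ^ k"
      using arith_geom_mean_weighted[of x y j k] \<open>j \<le> k\<close> 4 \<open>0 \<le> sin \<phi>\<close> \<open>0 \<le> cos \<phi>\<close>
      by (simp add: x_def y_def)
    then have "\<sigma> ^ j * \<tau> ^ (k - j) * (x ^ j * y ^ (k - j)) \<le> \<sigma> ^ j * \<tau> ^ (k - j) * cos (\<theta> - \<phi>) ^ k"
      using 4 by (intro mult_left_mono) auto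
    moreover have "\<sigma> ^ j * \<tau> ^ (k - j) * (x ^ j * y ^ (k - j)) = sin_cos_monomial k j \<phi>"
      using 4 by (simp add: x_def y_def sin_cos_monomial_def power_divide)
    ultimately show ?thesis
      by (simp add: sin_cos_monomial_def \<sigma>_def \<tau>_def)
  qed
qed

lemma sin_cos_monomial_le_gaussian:
  assumes "0 \<le> \<theta>" "\<theta> \<le> pi / 2" "0 \<le> \<phi>" "\<phi> \<le> pi / 2" "real k * (sin \<theta>)\<^sup>2 = real j"
  shows "sin_cos_monomial k j \<phi> \<le> sin_cos_monomial k j \<theta> * exp (- (real k / 3) * (\<theta> - \<phi>)\<^sup>2)"
proof -
  have "\<bar>\<theta> - \<phi>\<bar> \<le> 2"
    using assms pi_half_less_two by linarith
  then have "cos (\<theta> - \<phi>) \<le> exp (- ((\<theta> - \<phi>)\<^sup>2 / 3))"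
    using cos_le_one_minus_sq_third exp_ge_add_one_self[of "- ((\<theta> - \<phi>)\<^sup>2 / 3)"] by fastforce
  moreover have "0 \<le> cos (\<theta> - \<phi>)"
    using assms by (intro cos_ge_zero) auto
  ultimately have "cos (\<theta> - \<phi>) ^ k \<le> exp (- ((\<theta> - \<phi>)\<^sup>2 / 3)) ^ k"
    by (rule power_mono)
  also have "\<dots> = exp (- (real k / 3) * (\<theta> - \<phi>)\<^sup>2)"
    by (simp add: exp_of_nat_mult[symmetric])
  finally show ?thesis
    using sin_cos_monomial_le_cos_diff_power[OF assms] sin_cos_monomial_pos[OF assms(1,2,5)]
    by (meson less_imp_le mult_left_mono order_trans)
qed

lemma power_ge_exp_quadratic:
  fixes \<sigma> r m :: real
  assumes "0 \<le> \<sigma>" "m * \<sigma> \<le> r" "0 < m" "m \<le> 1" "real k * \<sigma>\<^sup>2 = real j"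
  shows "\<sigma> ^ j * exp (real k * (\<sigma> * (r - \<sigma>) - (r - \<sigma>)\<^sup>2 / (2 * m))) \<le> r ^ j"
proof (cases "\<sigma> = 0")
  case True
  with assms have "j = 0" by simp
  with True assms(3) show ?thesis
    by (simp add: mult_nonneg_nonneg)
next
  case False
  with assms have "0 < \<sigma>" by simp
  with assms have "0 < r"
    using mult_pos_pos[of m \<sigma>] by linarith
  define x where "x = r / \<sigma>"
  have "m \<le> x"
    using assms \<open>0 < \<sigma>\<close> by (simp add: x_def pos_le_divide_eq)
  have "real k * (\<sigma> * (r - \<sigma>) - (r - \<sigma>)\<^sup>2 / (2 * m)) = real j * (x - 1 - (x - 1)\<^sup>2 / (2 * m))"
    unfolding assms(5)[symmetric] x_def using \<open>0 < \<sigma>\<close> \<open>0 < m\<close>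
    by (simp add: power2_eq_square field_simps)
  also have "\<dots> \<le> real j * ln x"
    using ln_ge_quadratic[OF assms(3,4) \<open>m \<le> x\<close>] by (simp add: mult_left_mono)
  finally have "exp (real k * (\<sigma> * (r - \<sigma>) - (r - \<sigma>)\<^sup>2 / (2 * m))) \<le> exp (real j * ln x)"
    by simp
  also have "\<dots> = x ^ j"
    using \<open>0 < \<sigma>\<close> \<open>0 < r\<close> by (simp add: x_def exp_of_nat_mult)
  finally show ?thesis
    using \<open>0 < \<sigma>\<close> by (simp add: x_def power_divide pos_le_divide_eq mult.commute)
qed

lemma sin_cos_monomial_ge_gaussian:
  assumes "0 \<le> \<theta>" "\<theta> \<le> pi / 2" "0 \<le> \<phi>" "\<phi> \<le> pi / 2" "real k * (sin \<theta>)\<^sup>2 = real j"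
    and "\<theta> \<le> 3 * \<phi>" "pi / 2 - \<theta> \<le> 3 * (pi / 2 - \<phi>)"
  shows "sin_cos_monomial k j \<theta> * exp (- 2 * real k * (\<theta> - \<phi>)\<^sup>2) \<le> sin_cos_monomial k j \<phi>"
proof -
  have "sin \<theta> \<le> 3 * sin \<phi>"
    using assms by (intro sin_le_three_sin) auto
  moreover have "sin (pi / 2 - \<theta>) \<le> 3 * sin (pi / 2 - \<phi>)"
    using assms by (intro sin_le_three_sin) auto
  ultimately have "sin \<theta> \<le> 3 * sin \<phi>" "cos \<theta> \<le> 3 * cos \<phi>"
    by (simp_all add: sin_cos_eq)
  define \<sigma> \<tau> r1 r2 where "\<sigma> = sin \<theta>" and "\<tau> = cos \<theta>" and "r1 = sin \<phi>" and "r2 = cos \<phi>"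
  define E1 E2 where "E1 = \<sigma> * (r1 - \<sigma>) - (r1 - \<sigma>)\<^sup>2 / (2 * (1/3))"
    and "E2 = \<tau> * (r2 - \<tau>) - (r2 - \<tau>)\<^sup>2 / (2 * (1/3))"
  have "0 \<le> \<sigma>" "0 \<le> \<tau>" "0 \<le> r1"
    using assms by (auto simp: \<sigma>_def \<tau>_def r1_def intro!: sin_ge_zero cos_ge_zero)
  have sin_part: "\<sigma> ^ j * exp (real k * E1) \<le> r1 ^ j"
    unfolding E1_def using assms \<open>sin \<theta> \<le> 3 * sin \<phi>\<close>
    by (intro power_ge_exp_quadratic) (auto simp: \<sigma>_def r1_def intro!: sin_ge_zero)
  have cos_part: "\<tau> ^ (k - j) * exp (real k * E2) \<le> r2 ^ (k - j)"
    unfolding E2_def using assms \<open>cos \<theta> \<le> 3 * cos \<phi>\<close> cos_sq_eq_exponent[OF assms(1,2,5)]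
    by (intro power_ge_exp_quadratic) (auto simp: \<tau>_def r2_def intro!: cos_ge_zero)
  have "\<sigma>\<^sup>2 + \<tau>\<^sup>2 = 1" "r1\<^sup>2 + r2\<^sup>2 = 1" "cos (\<theta> - \<phi>) = \<sigma> * r1 + \<tau> * r2"
    by (simp_all add: \<sigma>_def \<tau>_def r1_def r2_def cos_diff)
  then have "E1 + E2 = - 4 * (1 - cos (\<theta> - \<phi>))"
    unfolding E1_def E2_def by algebra
  also have "\<dots> \<ge> - 2 * (\<theta> - \<phi>)\<^sup>2"
    using cos_ge_one_minus_sq_half[of "\<theta> - \<phi>"] by simp
  finally have "real k * (- 2 * (\<theta> - \<phi>)\<^sup>2) \<le> real k * (E1 + E2)"
    by (rule mult_left_mono) simp
  then have "exp (- 2 * real k * (\<theta> - \<phi>)\<^sup>2) \<le> exp (real k * E1) * exp (real k * E2)"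
    by (simp add: exp_add[symmetric] distrib_left)
  then have "\<sigma> ^ j * \<tau> ^ (k - j) * exp (- 2 * real k * (\<theta> - \<phi>)\<^sup>2)
      \<le> (\<sigma> ^ j * exp (real k * E1)) * (\<tau> ^ (k - j) * exp (real k * E2))"
    using \<open>0 \<le> \<sigma>\<close> \<open>0 \<le> \<tau>\<close> by (simp add: mult_left_mono mult_ac)
  also have "\<dots> \<le> r1 ^ j * r2 ^ (k - j)"
    using sin_part cos_part \<open>0 \<le> \<tau>\<close> \<open>0 \<le> r1\<close> by (intro mult_mono) auto
  finally show ?thesis
    by (simp add: sin_cos_monomial_def \<sigma>_def \<tau>_def r1_def r2_def)
qed

definition normalized_modulus :: "nat \<Rightarrow> nat \<Rightarrow> real \<Rightarrow> real \<Rightarrow> real" where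
  "normalized_modulus k j \<theta> \<phi> = sin_cos_monomial k j \<phi> / sin_cos_monomial k j \<theta>"

lemma normalized_modulus_bounds:
  assumes "0 \<le> \<theta>" "\<theta> \<le> pi / 2" "0 \<le> \<phi>" "\<phi> \<le> pi / 2" "real k * (sin \<theta>)\<^sup>2 = real j"
  shows "0 \<le> normalized_modulus k j \<theta> \<phi>"
    and "normalized_modulus k j \<theta> \<phi> \<le> exp (- (real k / 3) * (\<theta> - \<phi>)\<^sup>2)"
    and "\<theta> \<le> 3 * \<phi> \<Longrightarrow> pi / 2 - \<theta> \<le> 3 * (pi / 2 - \<phi>) \<Longrightarrow>
      exp (- 2 * real k * (\<theta> - \<phi>)\<^sup>2) \<le> normalized_modulus k j \<theta> \<phi>"
proof -
  have P: "0 < sin_cos_monomial k j \<theta>"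
    using assms(1,2,5) by (rule sin_cos_monomial_pos)
  have "0 \<le> sin_cos_monomial k j \<phi>"
    using assms(3,4) unfolding sin_cos_monomial_def
    by (intro mult_nonneg_nonneg zero_le_power sin_ge_zero cos_ge_zero) auto
  then show "0 \<le> normalized_modulus k j \<theta> \<phi>"
    using P by (simp add: normalized_modulus_def)
  show "normalized_modulus k j \<theta> \<phi> \<le> exp (- (real k / 3) * (\<theta> - \<phi>)\<^sup>2)"
    using sin_cos_monomial_le_gaussian[OF assms] P
    by (simp add: normalized_modulus_def pos_divide_le_eq mult.commute)
  show "exp (- 2 * real k * (\<theta> - \<phi>)\<^sup>2) \<le> normalized_modulus k j \<theta> \<phi>"
    if "\<theta> \<le> 3 * \<phi>" "pi / 2 - \<theta> \<le> 3 * (pi / 2 - \<phi>)"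
    using sin_cos_monomial_ge_gaussian[OF assms that] P
    by (simp add: normalized_modulus_def pos_le_divide_eq mult.commute)
qed

section \<open>Peak angles near a uniform grid\<close>

definition peak_angle :: "nat \<Rightarrow> nat \<Rightarrow> real" where
  "peak_angle k j = arcsin (sqrt (real j / real k))"

definition exponent_below :: "nat \<Rightarrow> real \<Rightarrow> nat" where
  "exponent_below k b = nat \<lfloor>real k * (sin b)\<^sup>2\<rfloor>"

lemma peak_angle:
  assumes "0 < k" "j \<le> k"
  shows "0 \<le> peak_angle k j" "peak_angle k j \<le> pi / 2"
    and "real k * (sin (peak_angle k j))\<^sup>2 = real j"
proof -
  define s where "s = sqrt (real j / real k)"
  have "0 \<le> s" "s \<le> 1"
    using assms by (auto simp: s_def)
  then have "0 \<le> arcsin s" "arcsin s \<le> pi / 2"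
    using arcsin_le_arcsin[of 0 s] arcsin_ubound[of s] by auto
  then show "0 \<le> peak_angle k j" "peak_angle k j \<le> pi / 2"
    by (simp_all add: peak_angle_def s_def)
  have "sin (arcsin s) = s"
    using \<open>0 \<le> s\<close> \<open>s \<le> 1\<close> by simp
  then show "real k * (sin (peak_angle k j))\<^sup>2 = real j"
    using assms by (simp add: peak_angle_def s_def[symmetric]) (simp add: s_def)
qed

lemma peak_angle_degree: "0 < k \<Longrightarrow> peak_angle k k = pi / 2"
  by (simp add: peak_angle_def)

lemma exponent_below_le: "exponent_below k b \<le> k"
proof -
  have "(sin b)\<^sup>2 \<le> 1"
    using sin_squared_eq[of b] zero_le_power2[of "cos b"] by linarith
  then have "real k * (sin b)\<^sup>2 \<le> real k"
    using mult_left_le[of "(sin b)\<^sup>2" "real k"] by simp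
  then show ?thesis
    unfolding exponent_below_def by linarith
qed

lemma exponent_below_right_angle: "exponent_below k (pi / 2) = k"
  by (simp add: exponent_below_def)

lemma peak_angle_exponent_below:
  assumes "0 < k" "0 \<le> b" "b \<le> pi / 2"
  defines "a \<equiv> peak_angle k (exponent_below k b)"
  shows "a \<le> b" "real k * (b - a)\<^sup>2 < 9"
proof -
  have "0 \<le> a" and ka: "real k * (sin a)\<^sup>2 = real (exponent_below k b)"
    using peak_angle[OF assms(1) exponent_below_le] by (auto simp: a_def)
  have "0 \<le> sin b"
    using assms by (intro sin_ge_zero) auto
  have "0 \<le> real k * (sin b)\<^sup>2"
    by simp
  then have floor: "real (exponent_below k b) \<le> real k * (sin b)\<^sup>2"
    "real k * (sin b)\<^sup>2 < real (exponent_below k b) + 1"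
    unfolding exponent_below_def by linarith+
  then have "real k * (sin a)\<^sup>2 \<le> real k * (sin b)\<^sup>2"
    using ka by linarith
  then have "(sin a)\<^sup>2 \<le> (sin b)\<^sup>2"
    using assms(1) by (simp add: mult_le_cancel_left_pos)
  then have "sin a \<le> sin b"
    using \<open>0 \<le> sin b\<close> by (simp add: abs_le_square_iff[symmetric])
  then have "arcsin (sin a) \<le> arcsin (sin b)"
    using \<open>0 \<le> sin b\<close> by (intro arcsin_le_arcsin) auto
  moreover have "a \<le> pi / 2"
    using peak_angle[OF assms(1) exponent_below_le] by (simp add: a_def)
  ultimately show "a \<le> b"
    using assms \<open>0 \<le> a\<close> by (simp add: arcsin_sin)
  have "(sin (b - a))\<^sup>2 \<le> (sin b)\<^sup>2 - (sin a)\<^sup>2"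
    using \<open>0 \<le> a\<close> \<open>a \<le> b\<close> assms(3) by (rule sin_diff_sq_le_sin_sq_diff)
  moreover have "(b - a)\<^sup>2 \<le> 9 * (sin (b - a))\<^sup>2"
  proof -
    have "b - a \<le> 3 * sin (b - a)"
      using \<open>a \<le> b\<close> \<open>0 \<le> a\<close> assms pi_half_less_two by (intro x_le_three_sin_x) linarith+
    then have "(b - a)\<^sup>2 \<le> (3 * sin (b - a))\<^sup>2"
      using \<open>a \<le> b\<close> by (intro power_mono) auto
    then show ?thesis by (simp add: power_mult_distrib)
  qed
  ultimately have "(b - a)\<^sup>2 \<le> 9 * ((sin b)\<^sup>2 - (sin a)\<^sup>2)"
    by (smt (verit))
  then have "real k * (b - a)\<^sup>2 \<le> real k * (9 * ((sin b)\<^sup>2 - (sin a)\<^sup>2))"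
    by (rule mult_left_mono) simp
  also have "\<dots> < 9"
    using floor ka by (simp add: algebra_simps)
  finally show "real k * (b - a)\<^sup>2 < 9" .
qed

lemma peak_angle_grid:
  assumes "0 < k" "3600 \<le> real k * \<delta>\<^sup>2" "0 < \<delta>" "real i * \<delta> \<le> pi / 2"
  defines "j \<equiv> exponent_below k (real i * \<delta>)"
  shows "real k * (sin (peak_angle k j))\<^sup>2 = real j \<and> 0 \<le> peak_angle k j \<and>
    peak_angle k j \<le> real i * \<delta> \<and> real i * \<delta> - peak_angle k j \<le> \<delta> / 20"
proof -
  define d where "d = real i * \<delta> - peak_angle k j"
  have "0 \<le> real i * \<delta>"
    using assms(3) by simp
  note below = peak_angle_exponent_below[OF assms(1) this assms(4), folded j_def, folded d_def]
  have "real k * (20 * d)\<^sup>2 < 3600"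
    using below(2) by (simp add: power_mult_distrib)
  then have "real k * (20 * d)\<^sup>2 < real k * \<delta>\<^sup>2"
    using assms(2) by linarith
  then have "(20 * d)\<^sup>2 < \<delta>\<^sup>2"
    using assms(1) by simp
  then have "20 * d < \<delta>"
    by (rule power_less_imp_less_base) (use assms(3) in simp)
  then show ?thesis
    using peak_angle[OF assms(1) exponent_below_le] below(1) by (simp add: j_def d_def)
qed

lemma exists_grid_size:
  assumes "14400 \<le> k"
  obtains M where "0 < M" "3600 \<le> real k * (pi / (2 * real M))\<^sup>2"
    "real k * (pi / (2 * real M))\<^sup>2 \<le> 14400"
proof
  define x where "x = pi * sqrt (real k) / 120"
  define M where "M = nat \<lfloor>x\<rfloor>"
  have "120 \<le> sqrt (real k)"
    using assms by (intro real_le_rsqrt) simp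
  then have "240 \<le> pi * sqrt (real k)"
    using pi_ge_two mult_mono[of 2 pi 120 "sqrt (real k)"] by simp
  then have "2 \<le> x"
    by (simp add: x_def)
  then have M: "real M \<le> x" "x / 2 \<le> real M"
    unfolding M_def by linarith+
  then show "0 < M"
    using \<open>2 \<le> x\<close> by simp
  have "real k * pi\<^sup>2 = 14400 * x\<^sup>2"
    by (simp add: x_def power_mult_distrib power_divide)
  then have eq: "real k * (pi / (2 * real M))\<^sup>2 = 3600 * (x / real M)\<^sup>2"
    by (simp add: power_divide power_mult_distrib)
  have "1 \<le> x / real M" "x / real M \<le> 2"
    using M \<open>2 \<le> x\<close> by (simp_all add: field_simps)
  then have "1 \<le> (x / real M)\<^sup>2" "(x / real M)\<^sup>2 \<le> 2\<^sup>2"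
    using power_mono[of "x / real M" 2 2] by (auto simp: one_le_power)
  then show "3600 \<le> real k * (pi / (2 * real M))\<^sup>2" "real k * (pi / (2 * real M))\<^sup>2 \<le> 14400"
    unfolding eq by simp_all
qed

section \<open>Concentration at the nearest peak\<close>

definition nat_dist :: "nat \<Rightarrow> nat \<Rightarrow> nat" where
  "nat_dist i c = (if c \<le> i then i - c else c - i)"

lemma real_nat_dist: "real (nat_dist i c) = \<bar>real i - real c\<bar>"
  by (simp add: nat_dist_def of_nat_diff)

lemma nearest_multiple:
  assumes "0 < \<delta>" "0 \<le> \<phi>" "\<phi> \<le> real M * \<delta>"
  obtains c where "c \<le> M" "\<bar>\<phi> - real c * \<delta>\<bar> \<le> \<delta> / 2"
proof
  define c where "c = nat \<lfloor>\<phi> / \<delta> + 1 / 2\<rfloor>"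
  have "0 \<le> \<phi> / \<delta>"
    using assms by simp
  then have "real c \<le> \<phi> / \<delta> + 1 / 2" "\<phi> / \<delta> + 1 / 2 < real c + 1"
    unfolding c_def by linarith+
  then have "real c * \<delta> \<le> \<phi> + \<delta> / 2" "\<phi> < real c * \<delta> + \<delta> / 2"
    using assms(1) by (simp_all add: field_simps)
  then show "\<bar>\<phi> - real c * \<delta>\<bar> \<le> \<delta> / 2"
    by linarith
  have "real c * \<delta> < real (M + 1) * \<delta>"
    using \<open>real c * \<delta> \<le> \<phi> + \<delta> / 2\<close> assms by (simp add: distrib_right)
  then show "c \<le> M"
    using assms(1) by simp
qed

lemma nearest_grid_point:
  fixes \<theta> :: "nat \<Rightarrow> real"
  assumes "0 < \<delta>" "real M * \<delta> = pi / 2"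
    and grid: "\<And>i. i \<le> M \<Longrightarrow> 0 \<le> \<theta> i \<and> \<theta> i \<le> real i * \<delta> \<and> real i * \<delta> - \<theta> i \<le> \<delta> / 20"
    and "\<theta> M = pi / 2" "0 \<le> \<phi>" "\<phi> \<le> pi / 2"
  obtains c where "c \<le> M" "\<bar>\<theta> c - \<phi>\<bar> \<le> 11 / 20 * \<delta>"
    \<comment> \<open>\<open>11 / 20 = 1 / 2 + 1 / 20\<close>: rounding \<open>\<phi> / \<delta>\<close> plus the distance of the peaks from the grid\<close>
    "\<And>i. i \<le> M \<Longrightarrow> (real (nat_dist i c) - 11 / 20) * \<delta> \<le> \<bar>\<theta> i - \<phi>\<bar>"
    "\<theta> c \<le> 3 * \<phi>" "pi / 2 - \<theta> c \<le> 3 * (pi / 2 - \<phi>)"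
proof -
  have "\<phi> \<le> real M * \<delta>"
    using assms(2,6) by simp
  then obtain c where "c \<le> M" and round: "\<bar>\<phi> - real c * \<delta>\<bar> \<le> \<delta> / 2"
    using nearest_multiple[OF assms(1,5)] by blast
  note grid_c = grid[OF \<open>c \<le> M\<close>]
  show ?thesis
  proof
    show "c \<le> M" by fact
    show "\<bar>\<theta> c - \<phi>\<bar> \<le> 11 / 20 * \<delta>"
      using grid_c round by linarith
    show "(real (nat_dist i c) - 11 / 20) * \<delta> \<le> \<bar>\<theta> i - \<phi>\<bar>" if "i \<le> M" for i
    proof -
      have "real (nat_dist i c) * \<delta> = \<bar>real i * \<delta> - real c * \<delta>\<bar>"
        using assms(1) by (simp add: real_nat_dist abs_mult left_diff_distrib[symmetric])
      moreover have "\<bar>real i * \<delta> - real c * \<delta>\<bar> \<le> \<bar>real i * \<delta> - \<theta> i\<bar> + \<bar>\<theta> i - \<phi>\<bar> + \<bar>\<phi> - real c * \<delta>\<bar>"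
        by arith
      moreover have "\<bar>real i * \<delta> - \<theta> i\<bar> \<le> \<delta> / 20"
        using grid[OF that] by simp
      ultimately show ?thesis
        using round by (simp add: left_diff_distrib)
    qed
    show "\<theta> c \<le> 3 * \<phi>"
    proof (cases "c = 0")
      case False
      then have "\<delta> \<le> real c * \<delta>"
        using assms(1) by simp
      then show ?thesis
        using grid_c round by linarith
    qed (use grid_c assms(5) in auto)
    show "pi / 2 - \<theta> c \<le> 3 * (pi / 2 - \<phi>)"
    proof (cases "c = M")
      case False
      with \<open>c \<le> M\<close> have "real c * \<delta> + \<delta> \<le> real M * \<delta>"
        using assms(1) mult_right_mono[of "real c + 1" "real M" \<delta>] by (simp add: distrib_right)
      then show ?thesis
        unfolding right_diff_distrib using grid_c round assms(2) by linarith
    qed (use assms(4,6) in auto)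
  qed
qed

lemma sum_power_le_geometric:
  fixes q :: real
  assumes "finite A" "inj_on f A" "\<And>i. i \<in> A \<Longrightarrow> r \<le> f i" "0 \<le> q" "q < 1"
  shows "(\<Sum>i\<in>A. q ^ f i) \<le> q ^ r / (1 - q)"
proof -
  have inj: "inj_on (\<lambda>i. f i - r) A"
    using assms(2,3) unfolding inj_on_def by (metis le_add_diff_inverse)
  have "(\<Sum>i\<in>A. q ^ f i) = q ^ r * (\<Sum>i\<in>A. q ^ (f i - r))"
    using assms(3) by (simp add: sum_distrib_left power_add[symmetric])
  also have "(\<Sum>i\<in>A. q ^ (f i - r)) = (\<Sum>n\<in>(\<lambda>i. f i - r) ` A. q ^ n)"
    using sum.reindex[OF inj, of "\<lambda>n. q ^ n"] by simp
  also have "\<dots> \<le> (\<Sum>n. q ^ n)"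
    using assms by (intro sum_le_suminf summable_geometric) auto
  also have "\<dots> = 1 / (1 - q)"
    using assms by (intro suminf_geometric) auto
  finally show ?thesis
    using assms(4) by (simp add: mult_left_mono)
qed

lemma sum_power_nat_dist_le:
  fixes q :: real
  assumes "finite A" "\<And>i. i \<in> A \<Longrightarrow> r \<le> nat_dist i c" "0 \<le> q" "q < 1"
  shows "(\<Sum>i\<in>A. q ^ nat_dist i c) \<le> 2 * q ^ r / (1 - q)"
proof -
  have "A = {i \<in> A. c \<le> i} \<union> {i \<in> A. i < c}"
    by auto
  then have "(\<Sum>i\<in>A. q ^ nat_dist i c)
      = (\<Sum>i\<in>{i \<in> A. c \<le> i}. q ^ nat_dist i c) + (\<Sum>i\<in>{i \<in> A. i < c}. q ^ nat_dist i c)"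
    using assms(1) by (metis (no_types, lifting) sum.union_disjoint finite_Un disjoint_iff mem_Collect_eq not_le)
  moreover have "inj_on (\<lambda>i. nat_dist i c) {i \<in> A. c \<le> i}" "inj_on (\<lambda>i. nat_dist i c) {i \<in> A. i < c}"
    by (auto simp: inj_on_def nat_dist_def)
  then have "(\<Sum>i\<in>{i \<in> A. c \<le> i}. q ^ nat_dist i c) \<le> q ^ r / (1 - q)"
    "(\<Sum>i\<in>{i \<in> A. i < c}. q ^ nat_dist i c) \<le> q ^ r / (1 - q)"
    using assms by (auto intro!: sum_power_le_geometric)
  ultimately show ?thesis
    by simp
qed

lemma card_nat_dist_le_one: "card {i \<in> A. nat_dist i c \<le> 1} \<le> 3"
proof -
  have "{i \<in> A. nat_dist i c \<le> 1} \<subseteq> {c - 1, c, c + 1}"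
    by (auto simp: nat_dist_def)
  then have "card {i \<in> A. nat_dist i c \<le> 1} \<le> card {c - 1, c, c + 1}"
    by (intro card_mono) auto
  also have "\<dots> \<le> 3"
    by (simp add: card_insert_if)
  finally show ?thesis .
qed

lemma gaussian_le_power_nat_dist:
  fixes d \<delta> :: real
  assumes "2 \<le> n" "(real n - 11 / 20) * \<delta> \<le> \<bar>d\<bar>" "0 < \<delta>"
  shows "exp (- (real k / 3) * d\<^sup>2) \<le> exp (- real k * \<delta>\<^sup>2 / 3) ^ n"
proof -
  have "0 \<le> (real n - 11 / 20) * \<delta>"
    using assms by simp
  then have "((real n - 11 / 20) * \<delta>)\<^sup>2 \<le> d\<^sup>2"
    using power_mono[OF assms(2), of 2] by simp
  moreover have "real n \<le> (real n - 11 / 20)\<^sup>2"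
  proof -
    have "(real n - 11 / 20)\<^sup>2 - real n = (real n - 2) * (real n - 1 / 10) + 41 / 400"
      by (simp add: power2_eq_square field_simps)
    moreover have "0 \<le> (real n - 2) * (real n - 1 / 10)"
      using assms(1) by simp
    ultimately show ?thesis by linarith
  qed
  then have "real n * \<delta>\<^sup>2 \<le> ((real n - 11 / 20) * \<delta>)\<^sup>2"
    by (simp add: power_mult_distrib mult_right_mono)
  ultimately have "real k / 3 * (real n * \<delta>\<^sup>2) \<le> real k / 3 * d\<^sup>2"
    by (intro mult_left_mono) auto
  then show ?thesis
    by (simp add: exp_of_nat_mult[symmetric] mult_ac)
qed

lemma sum_far_terms_le:
  fixes t \<theta> :: "nat \<Rightarrow> real"
  assumes "3 \<le> real k * \<delta>\<^sup>2" "0 < \<delta>" "A \<subseteq> {..M}" "\<And>i. i \<in> A \<Longrightarrow> 2 \<le> nat_dist i c"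
    and t: "\<And>i. i \<le> M \<Longrightarrow> 0 \<le> t i \<and> t i \<le> exp (- (real k / 3) * (\<theta> i - \<phi>)\<^sup>2)"
    and far: "\<And>i. i \<le> M \<Longrightarrow> (real (nat_dist i c) - 11 / 20) * \<delta> \<le> \<bar>\<theta> i - \<phi>\<bar>"
  shows "(\<Sum>i\<in>A. t i) \<le> 4 * exp (- 2 * real k * \<delta>\<^sup>2 / 3)"
proof -
  define q where "q = exp (- real k * \<delta>\<^sup>2 / 3)"
  have "0 \<le> q" by (simp add: q_def)
  have "2 \<le> 1 + real k * \<delta>\<^sup>2 / 3"
    using assms(1) by simp
  also have "\<dots> \<le> exp (real k * \<delta>\<^sup>2 / 3)"
    by (rule exp_ge_add_one_self)
  finally have "q \<le> 1 / 2"
    by (simp add: q_def exp_minus field_simps)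
  have "finite A"
    using assms(3) finite_subset by blast
  have "(\<Sum>i\<in>A. t i) \<le> (\<Sum>i\<in>A. q ^ nat_dist i c)"
  proof (rule sum_mono)
    fix i assume "i \<in> A"
    then have "i \<le> M" using assms(3) by auto
    then show "t i \<le> q ^ nat_dist i c"
      using t[OF \<open>i \<le> M\<close>] gaussian_le_power_nat_dist[OF assms(4)[OF \<open>i \<in> A\<close>] far[OF \<open>i \<le> M\<close>] assms(2), where k = k]
      by (simp add: q_def)
  qed
  also have "\<dots> \<le> 2 * q\<^sup>2 / (1 - q)"
    using \<open>finite A\<close> assms(4) \<open>0 \<le> q\<close> \<open>q \<le> 1 / 2\<close> by (intro sum_power_nat_dist_le) auto
  also have "\<dots> \<le> 2 * q\<^sup>2 / (1 / 2)"
    using \<open>q \<le> 1 / 2\<close> by (intro divide_left_mono) auto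
  also have "\<dots> = 4 * q\<^sup>2"
    by simp
  also have "q\<^sup>2 = exp (- 2 * real k * \<delta>\<^sup>2 / 3)"
    by (simp add: q_def power2_eq_square exp_add[symmetric])
  finally show ?thesis .
qed

lemma sum_terms_le_four:
  fixes t \<theta> :: "nat \<Rightarrow> real"
  assumes "6 \<le> real k * \<delta>\<^sup>2" "0 < \<delta>"
    and t: "\<And>i. i \<le> M \<Longrightarrow> 0 \<le> t i \<and> t i \<le> exp (- (real k / 3) * (\<theta> i - \<phi>)\<^sup>2)"
    and far: "\<And>i. i \<le> M \<Longrightarrow> (real (nat_dist i c) - 11 / 20) * \<delta> \<le> \<bar>\<theta> i - \<phi>\<bar>"
  shows "(\<Sum>i\<le>M. t i) \<le> 4"
proof -
  define N F where "N = {i \<in> {..M}. nat_dist i c \<le> 1}" and "F = {i \<in> {..M}. 2 \<le> nat_dist i c}"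
  have "(\<Sum>i\<le>M. t i) = (\<Sum>i\<in>N. t i) + (\<Sum>i\<in>F. t i)"
    by (subst sum.union_disjoint[symmetric]) (auto simp: N_def F_def intro: sum.cong)
  also have "(\<Sum>i\<in>N. t i) \<le> (\<Sum>i\<in>N. 1)"
  proof (rule sum_mono)
    fix i assume "i \<in> N"
    then have "t i \<le> exp (- (real k / 3) * (\<theta> i - \<phi>)\<^sup>2)"
      using t by (simp add: N_def)
    also have "\<dots> \<le> 1"
      by simp
    finally show "t i \<le> 1" .
  qed
  also have "\<dots> \<le> 3"
    using card_nat_dist_le_one[of "{..M}" c] by (simp add: N_def)
  also have "(\<Sum>i\<in>F. t i) \<le> 4 * exp (- 2 * real k * \<delta>\<^sup>2 / 3)"
    using assms by (intro sum_far_terms_le) (auto simp: F_def)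
  also have "\<dots> \<le> 1"
  proof -
    have "4 \<le> 1 + 2 * real k * \<delta>\<^sup>2 / 3"
      using assms(1) by simp
    also have "\<dots> \<le> exp (2 * real k * \<delta>\<^sup>2 / 3)"
      by (rule exp_ge_add_one_self)
    finally show ?thesis
      by (simp add: exp_minus field_simps)
  qed
  finally show ?thesis by simp
qed

lemma gaussian_ge_close:
  fixes d \<delta> :: real
  assumes "\<bar>d\<bar> \<le> 11 / 20 * \<delta>"
  shows "exp (- (121 / 200) * (real k * \<delta>\<^sup>2)) \<le> exp (- 2 * real k * d\<^sup>2)"
proof -
  have "d\<^sup>2 \<le> 121 / 400 * \<delta>\<^sup>2"
    using assms power_mono[of "\<bar>d\<bar>" "11 / 20 * \<delta>" 2]
    by (simp add: power_mult_distrib power_divide)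
  then have "real k * d\<^sup>2 \<le> real k * (121 / 400 * \<delta>\<^sup>2)"
    by (rule mult_left_mono) simp
  then show ?thesis
    by simp
qed

lemma sum_same_parity_le_half_peak:
  fixes t \<theta> :: "nat \<Rightarrow> real"
  assumes "120 \<le> real k * \<delta>\<^sup>2" "0 < \<delta>"
    and t: "\<And>i. i \<le> M \<Longrightarrow> 0 \<le> t i \<and> t i \<le> exp (- (real k / 3) * (\<theta> i - \<phi>)\<^sup>2)"
    and far: "\<And>i. i \<le> M \<Longrightarrow> (real (nat_dist i c) - 11 / 20) * \<delta> \<le> \<bar>\<theta> i - \<phi>\<bar>"
    and close: "\<bar>\<theta> c - \<phi>\<bar> \<le> 11 / 20 * \<delta>"
    and peak: "exp (- 2 * real k * (\<theta> c - \<phi>)\<^sup>2) \<le> t c"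
  shows "(\<Sum>i | i \<le> M \<and> i \<noteq> c \<and> even i = even c. t i) \<le> t c / 2"
proof -
  have "2 \<le> nat_dist i c" if "i \<noteq> c" "even i = even c" for i
    using that by (auto simp: nat_dist_def) presburger+
  then have "(\<Sum>i | i \<le> M \<and> i \<noteq> c \<and> even i = even c. t i) \<le> 4 * exp (- 2 * real k * \<delta>\<^sup>2 / 3)"
    using assms by (intro sum_far_terms_le) auto
  also have "\<dots> \<le> exp (- (121 / 200) * (real k * \<delta>\<^sup>2)) / 2"
  proof -
    have "8 \<le> 1 + 37 / 600 * (real k * \<delta>\<^sup>2)"
      using assms(1) by simp
    also have "\<dots> \<le> exp (37 / 600 * (real k * \<delta>\<^sup>2))"
      by (rule exp_ge_add_one_self)
    finally have "8 * exp (- 2 * real k * \<delta>\<^sup>2 / 3)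
        \<le> exp (37 / 600 * (real k * \<delta>\<^sup>2)) * exp (- 2 * real k * \<delta>\<^sup>2 / 3)"
      by (intro mult_right_mono) auto
    then show ?thesis
      by (simp add: exp_add[symmetric])
  qed
  also have "exp (- (121 / 200) * (real k * \<delta>\<^sup>2)) \<le> exp (- 2 * real k * (\<theta> c - \<phi>)\<^sup>2)"
    using close by (rule gaussian_ge_close)
  finally show ?thesis
    using peak by simp
qed

section \<open>The two polynomials\<close>

lemma hom_poly2_sum:
  assumes "finite I" "\<And>i. i \<in> I \<Longrightarrow> e i \<le> k"
  shows "hom_poly2 k (\<lambda>z1 z2. \<Sum>i\<in>I. a i * z1 ^ e i * z2 ^ (k - e i))"
  unfolding hom_poly2_def
proof (intro exI allI)
  fix z1 z2 :: complex
  let ?h = "\<lambda>i. a i * z1 ^ e i * z2 ^ (k - e i)"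
  have "(\<Sum>j\<le>k. (\<Sum>i | i \<in> I \<and> e i = j. a i) * z1 ^ j * z2 ^ (k - j))
      = (\<Sum>j\<le>k. \<Sum>i | i \<in> I \<and> e i = j. ?h i)"
    by (intro sum.cong) (auto simp: sum_distrib_right)
  also have "\<dots> = (\<Sum>i\<in>I. ?h i)"
    using assms by (intro sum.group) auto
  finally show "(\<Sum>i\<in>I. ?h i) = (\<Sum>j\<le>k. (\<Sum>i | i \<in> I \<and> e i = j. a i) * z1 ^ j * z2 ^ (k - j))"
    by simp
qed

definition normalized_monomial_sum ::
    "nat \<Rightarrow> (nat \<Rightarrow> nat) \<Rightarrow> (nat \<Rightarrow> real) \<Rightarrow> nat set \<Rightarrow> complex \<Rightarrow> complex \<Rightarrow> complex" where
  "normalized_monomial_sum k e \<theta> I z1 z2 =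
    (\<Sum>i\<in>I. z1 ^ e i * z2 ^ (k - e i) / of_real (sin_cos_monomial k (e i) (\<theta> i)))"

lemma hom_poly2_normalized_monomial_sum:
  assumes "finite I" "\<And>i. i \<in> I \<Longrightarrow> e i \<le> k"
  shows "hom_poly2 k (\<lambda>z1 z2. a * normalized_monomial_sum k e \<theta> I z1 z2)"
proof -
  have "hom_poly2 k (\<lambda>z1 z2. \<Sum>i\<in>I. a / of_real (sin_cos_monomial k (e i) (\<theta> i)) * z1 ^ e i * z2 ^ (k - e i))"
    using assms by (rule hom_poly2_sum)
  then show ?thesis
    by (simp add: normalized_monomial_sum_def sum_distrib_left mult_ac)
qed

lemma norm_normalized_monomial:
  assumes "cmod z1 = sin \<phi>" "cmod z2 = cos \<phi>" "0 \<le> \<theta>" "\<theta> \<le> pi / 2"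
  shows "cmod (z1 ^ j * z2 ^ (k - j) / of_real (sin_cos_monomial k j \<theta>)) = normalized_modulus k j \<theta> \<phi>"
proof -
  have "cmod (z1 ^ j * z2 ^ (k - j)) = sin_cos_monomial k j \<phi>"
    using assms(1,2) by (simp add: norm_mult norm_power sin_cos_monomial_def)
  moreover have "0 \<le> sin_cos_monomial k j \<theta>"
    using assms(3,4) unfolding sin_cos_monomial_def
    by (intro mult_nonneg_nonneg zero_le_power sin_ge_zero cos_ge_zero) auto
  ultimately show ?thesis
    by (simp add: norm_divide normalized_modulus_def)
qed

lemma norm_sum_ge_term:
  fixes f :: "'i \<Rightarrow> 'a::real_normed_vector"
  assumes "finite J" "c \<in> J"
  shows "norm (f c) - (\<Sum>i\<in>J - {c}. norm (f i)) \<le> norm (\<Sum>i\<in>J. f i)"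
proof -
  let ?R = "\<Sum>i\<in>J - {c}. f i"
  have "norm (f c) \<le> norm (\<Sum>i\<in>J. f i) + norm ?R"
    using norm_triangle_ineq4[of "\<Sum>i\<in>J. f i" ?R] sum.remove[OF assms, of f] by simp
  moreover have "norm ?R \<le> (\<Sum>i\<in>J - {c}. norm (f i))"
    by (rule norm_sum)
  ultimately show ?thesis
    by linarith
qed

lemma
  assumes "cmod z1 = sin \<phi>" "cmod z2 = cos \<phi>" "\<And>i. i \<in> I \<Longrightarrow> 0 \<le> \<theta> i \<and> \<theta> i \<le> pi / 2"
  shows norm_normalized_monomial_sum_le:
      "norm (normalized_monomial_sum k e \<theta> I z1 z2) \<le> (\<Sum>i\<in>I. normalized_modulus k (e i) (\<theta> i) \<phi>)"
    and norm_normalized_monomial_sum_ge: "finite I \<Longrightarrow> c \<in> I \<Longrightarrow>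
      normalized_modulus k (e c) (\<theta> c) \<phi> - (\<Sum>i\<in>I - {c}. normalized_modulus k (e i) (\<theta> i) \<phi>)
        \<le> norm (normalized_monomial_sum k e \<theta> I z1 z2)"
proof -
  define f where "f i = z1 ^ e i * z2 ^ (k - e i) / of_real (sin_cos_monomial k (e i) (\<theta> i))" for i
  have norm_f: "norm (f i) = normalized_modulus k (e i) (\<theta> i) \<phi>" if "i \<in> I" for i
    unfolding f_def using assms(1,2) assms(3)[OF that] by (intro norm_normalized_monomial) auto
  have "norm (normalized_monomial_sum k e \<theta> I z1 z2) \<le> (\<Sum>i\<in>I. norm (f i))"
    unfolding normalized_monomial_sum_def f_def by (rule norm_sum)
  then show "norm (normalized_monomial_sum k e \<theta> I z1 z2) \<le> (\<Sum>i\<in>I. normalized_modulus k (e i) (\<theta> i) \<phi>)"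
    using norm_f by simp
  assume "finite I" "c \<in> I"
  then have "norm (f c) - (\<Sum>i\<in>I - {c}. norm (f i)) \<le> norm (normalized_monomial_sum k e \<theta> I z1 z2)"
    unfolding normalized_monomial_sum_def f_def by (rule norm_sum_ge_term)
  then show "normalized_modulus k (e c) (\<theta> c) \<phi> - (\<Sum>i\<in>I - {c}. normalized_modulus k (e i) (\<theta> i) \<phi>)
      \<le> norm (normalized_monomial_sum k e \<theta> I z1 z2)"
    using norm_f \<open>c \<in> I\<close> by simp
qed

lemma norm2_ge_max: "max (cmod a) (cmod b) \<le> norm2 a b"
  by (auto simp: norm2_def intro: real_le_rsqrt)

lemma sphere_angle:
  assumes "norm2 z1 z2 = 1"
  obtains \<phi> where "0 \<le> \<phi>" "\<phi> \<le> pi / 2" "cmod z1 = sin \<phi>" "cmod z2 = cos \<phi>"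
proof
  have sq: "(cmod z1)\<^sup>2 + (cmod z2)\<^sup>2 = 1"
    using assms by (simp add: norm2_def)
  then have hi: "cmod z1 \<le> 1"
    by (metis abs_norm_cancel abs_square_le_1 le_add_same_cancel1 zero_le_power2)
  have lo: "-1 \<le> cmod z1"
    by (rule order_trans[OF _ norm_ge_zero]) simp
  from hi lo have "cos (arcsin (cmod z1)) = sqrt (1 - (cmod z1)\<^sup>2)"
    by (rule cos_arcsin[rotated])
  also have "1 - (cmod z1)\<^sup>2 = (cmod z2)\<^sup>2"
    using sq by simp
  also have "sqrt ((cmod z2)\<^sup>2) = cmod z2"
    by simp
  finally show "cmod z2 = cos (arcsin (cmod z1))" ..
  show "0 \<le> arcsin (cmod z1)" "arcsin (cmod z1) \<le> pi / 2" "cmod z1 = sin (arcsin (cmod z1))"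
    using hi lo arcsin_le_arcsin[of 0 "cmod z1"] arcsin_ubound[of "cmod z1"] by auto
qed

lemma normalized_monomial_sums_on_sphere:
  fixes e :: "nat \<Rightarrow> nat" and \<theta> :: "nat \<Rightarrow> real"
  assumes "0 < \<delta>" "real M * \<delta> = pi / 2" "120 \<le> real k * \<delta>\<^sup>2"
    and grid: "\<And>i. i \<le> M \<Longrightarrow> real k * (sin (\<theta> i))\<^sup>2 = real (e i) \<and>
      0 \<le> \<theta> i \<and> \<theta> i \<le> real i * \<delta> \<and> real i * \<delta> - \<theta> i \<le> \<delta> / 20"
    and "\<theta> M = pi / 2" "0 \<le> \<phi>" "\<phi> \<le> pi / 2" "cmod z1 = sin \<phi>" "cmod z2 = cos \<phi>"
  defines "F I \<equiv> normalized_monomial_sum k e \<theta> I z1 z2"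
  shows "\<And>I. I \<subseteq> {..M} \<Longrightarrow> norm (F I) \<le> 4"
    and "exp (- real k * \<delta>\<^sup>2) / 2 \<le> max (norm (F {i. i \<le> M \<and> even i})) (norm (F {i. i \<le> M \<and> odd i}))"
proof -
  define t where "t i = normalized_modulus k (e i) (\<theta> i) \<phi>" for i
  have angle: "0 \<le> \<theta> i \<and> \<theta> i \<le> pi / 2" if "i \<le> M" for i
  proof -
    have "real i * \<delta> \<le> real M * \<delta>"
      using that assms(1) by (intro mult_right_mono) auto
    then show ?thesis
      using grid[OF that] assms(2) by linarith
  qed
  have t: "0 \<le> t i \<and> t i \<le> exp (- (real k / 3) * (\<theta> i - \<phi>)\<^sup>2)" if "i \<le> M" for i
    unfolding t_def using angle[OF that] grid[OF that] assms(6,7)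
      normalized_modulus_bounds(1,2)[where \<theta> = "\<theta> i" and \<phi> = \<phi> and k = k and j = "e i"]
    by auto
  have grid_angles: "0 \<le> \<theta> i \<and> \<theta> i \<le> real i * \<delta> \<and> real i * \<delta> - \<theta> i \<le> \<delta> / 20"
    if "i \<le> M" for i
    using grid[OF that] by blast
  obtain c where "c \<le> M" and close: "\<bar>\<theta> c - \<phi>\<bar> \<le> 11 / 20 * \<delta>"
    and far: "\<And>i. i \<le> M \<Longrightarrow> (real (nat_dist i c) - 11 / 20) * \<delta> \<le> \<bar>\<theta> i - \<phi>\<bar>"
    and "\<theta> c \<le> 3 * \<phi>" "pi / 2 - \<theta> c \<le> 3 * (pi / 2 - \<phi>)"
    using nearest_grid_point[OF assms(1,2) grid_angles assms(5-7)] by blast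
  show "norm (F I) \<le> 4" if "I \<subseteq> {..M}" for I
  proof -
    have "norm (F I) \<le> (\<Sum>i\<in>I. t i)"
      unfolding F_def t_def using that angle assms(8,9) by (intro norm_normalized_monomial_sum_le) auto
    also have "\<dots> \<le> (\<Sum>i\<le>M. t i)"
      using that t by (intro sum_mono2) auto
    also have "\<dots> \<le> 4"
      using assms(1,3) t far by (intro sum_terms_le_four) auto
    finally show ?thesis .
  qed
  have peak: "exp (- 2 * real k * (\<theta> c - \<phi>)\<^sup>2) \<le> t c"
    unfolding t_def using angle[OF \<open>c \<le> M\<close>] grid[OF \<open>c \<le> M\<close>] assms(6,7) \<open>\<theta> c \<le> 3 * \<phi>\<close>
      \<open>pi / 2 - \<theta> c \<le> 3 * (pi / 2 - \<phi>)\<close>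
    by (intro normalized_modulus_bounds(3)) auto
  define J where "J = {i. i \<le> M \<and> even i = even c}"
  have "J - {c} = {i. i \<le> M \<and> i \<noteq> c \<and> even i = even c}"
    by (auto simp: J_def)
  then have "(\<Sum>i\<in>J - {c}. t i) \<le> t c / 2"
    using sum_same_parity_le_half_peak[OF assms(3,1) t far close peak] by simp
  moreover have "t c - (\<Sum>i\<in>J - {c}. t i) \<le> norm (F J)"
    unfolding F_def t_def using \<open>c \<le> M\<close> angle assms(8,9)
    by (intro norm_normalized_monomial_sum_ge) (auto simp: J_def)
  moreover have "exp (- real k * \<delta>\<^sup>2) \<le> exp (- (121 / 200) * (real k * \<delta>\<^sup>2))"
    by simp
  ultimately have "exp (- real k * \<delta>\<^sup>2) / 2 \<le> norm (F J)"
    using gaussian_ge_close[OF close, of k] peak by linarith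
  moreover have "J = {i. i \<le> M \<and> even i} \<or> J = {i. i \<le> M \<and> odd i}"
    by (auto simp: J_def)
  ultimately show "exp (- real k * \<delta>\<^sup>2) / 2 \<le> max (norm (F {i. i \<le> M \<and> even i})) (norm (F {i. i \<le> M \<and> odd i}))"
    by (auto simp: le_max_iff_disj)
qed

lemma normalized_monomial_sums_norm2_bounds:
  fixes e :: "nat \<Rightarrow> nat" and \<theta> :: "nat \<Rightarrow> real"
  assumes "0 < \<delta>" "real M * \<delta> = pi / 2" "120 \<le> real k * \<delta>\<^sup>2"
    and grid: "\<And>i. i \<le> M \<Longrightarrow> real k * (sin (\<theta> i))\<^sup>2 = real (e i) \<and>
      0 \<le> \<theta> i \<and> \<theta> i \<le> real i * \<delta> \<and> real i * \<delta> - \<theta> i \<le> \<delta> / 20"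
    and "\<theta> M = pi / 2" "norm2 z1 z2 = 1"
  defines "p \<equiv> 1 / 6 * normalized_monomial_sum k e \<theta> {i. i \<le> M \<and> even i} z1 z2"
    and "q \<equiv> 1 / 6 * normalized_monomial_sum k e \<theta> {i. i \<le> M \<and> odd i} z1 z2"
  shows "exp (- real k * \<delta>\<^sup>2) / 12 \<le> norm2 p q" "norm2 p q \<le> 1"
proof -
  obtain \<phi> where \<phi>: "0 \<le> \<phi>" "\<phi> \<le> pi / 2" "cmod z1 = sin \<phi>" "cmod z2 = cos \<phi>"
    using sphere_angle[OF assms(6)] by blast
  note on_sphere = normalized_monomial_sums_on_sphere[OF assms(1-3) grid assms(5) \<phi>]
  have "cmod p \<le> 2 / 3" "cmod q \<le> 2 / 3"
    using on_sphere(1)[of "{i. i \<le> M \<and> even i}"] on_sphere(1)[of "{i. i \<le> M \<and> odd i}"]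
    by (auto simp: p_def q_def norm_mult)
  then have "(cmod p)\<^sup>2 \<le> (2 / 3)\<^sup>2" "(cmod q)\<^sup>2 \<le> (2 / 3)\<^sup>2"
    by (auto intro!: power_mono)
  then have "(cmod p)\<^sup>2 + (cmod q)\<^sup>2 \<le> 1"
    by (simp add: power_divide)
  then show "norm2 p q \<le> 1"
    by (simp add: norm2_def)
  have "exp (- real k * \<delta>\<^sup>2) / 12 \<le> max (cmod (6 * p)) (cmod (6 * q)) / 6"
    using on_sphere(2) by (simp add: p_def q_def)
  also have "\<dots> = max (cmod p) (cmod q)"
    by (simp add: norm_mult max_divide_distrib_right max_mult_distrib_left)
  also have "\<dots> \<le> norm2 p q"
    by (rule norm2_ge_max)
  finally show "exp (- real k * \<delta>\<^sup>2) / 12 \<le> norm2 p q" .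
qed

lemma exists_hom_polys_sphere_to_annulus:
  assumes "14400 \<le> k"
  shows "\<exists>p q. hom_poly2 k p \<and> hom_poly2 k q \<and>
    (\<forall>z1 z2. norm2 z1 z2 = 1 \<longrightarrow>
      exp (- 14400) / 12 \<le> norm2 (p z1 z2) (q z1 z2) \<and> norm2 (p z1 z2) (q z1 z2) \<le> 1)"
proof -
  obtain M where "0 < M" and size: "3600 \<le> real k * (pi / (2 * real M))\<^sup>2"
    "real k * (pi / (2 * real M))\<^sup>2 \<le> 14400"
    using exists_grid_size[OF assms] by blast
  define \<delta> where "\<delta> = pi / (2 * real M)"
  define e where "e i = exponent_below k (real i * \<delta>)" for i
  define \<theta> where "\<theta> i = peak_angle k (e i)" for i
  have "0 < k" "0 < \<delta>" "real M * \<delta> = pi / 2"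
    using assms \<open>0 < M\<close> by (auto simp: \<delta>_def)
  from size have size: "3600 \<le> real k * \<delta>\<^sup>2" "real k * \<delta>\<^sup>2 \<le> 14400"
    unfolding \<delta>_def .
  have grid: "real k * (sin (\<theta> i))\<^sup>2 = real (e i) \<and>
      0 \<le> \<theta> i \<and> \<theta> i \<le> real i * \<delta> \<and> real i * \<delta> - \<theta> i \<le> \<delta> / 20" if "i \<le> M" for i
  proof -
    have "real i * \<delta> \<le> real M * \<delta>"
      using that \<open>0 < \<delta>\<close> by (intro mult_right_mono) auto
    then show ?thesis
      unfolding \<theta>_def e_def using \<open>0 < k\<close> size(1) \<open>0 < \<delta>\<close> \<open>real M * \<delta> = pi / 2\<close>
      by (intro peak_angle_grid) auto
  qed
  have "\<theta> M = pi / 2"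
    unfolding \<theta>_def e_def \<open>real M * \<delta> = pi / 2\<close> exponent_below_right_angle
    using \<open>0 < k\<close> by (rule peak_angle_degree)
  define p q where "p = (\<lambda>z1 z2. 1 / 6 * normalized_monomial_sum k e \<theta> {i. i \<le> M \<and> even i} z1 z2)"
    and "q = (\<lambda>z1 z2. 1 / 6 * normalized_monomial_sum k e \<theta> {i. i \<le> M \<and> odd i} z1 z2)"
  have "hom_poly2 k p" "hom_poly2 k q"
    unfolding p_def q_def e_def
    by (intro hom_poly2_normalized_monomial_sum; simp add: exponent_below_le)+
  moreover have "exp (- 14400) / 12 \<le> norm2 (p z1 z2) (q z1 z2) \<and> norm2 (p z1 z2) (q z1 z2) \<le> 1"
    if "norm2 z1 z2 = 1" for z1 z2
  proof -
    have "120 \<le> real k * \<delta>\<^sup>2" "exp (- 14400) / 12 \<le> exp (- real k * \<delta>\<^sup>2) / 12"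
      using size by simp_all
    with normalized_monomial_sums_norm2_bounds[OF \<open>0 < \<delta>\<close> \<open>real M * \<delta> = pi / 2\<close> this(1) grid
        \<open>\<theta> M = pi / 2\<close> that]
    show ?thesis
      unfolding p_def q_def by linarith
  qed
  ultimately show ?thesis
    by blast
qed

theorem proposition1:
  shows "\<exists>\<eta>::real. 0 < \<eta> \<and> \<eta> \<le> 1 \<and>
    (\<exists>K::nat. \<forall>k\<ge>K. \<exists>p q. hom_poly2 k p \<and> hom_poly2 k q \<and>
       (\<forall>z1 z2. norm2 z1 z2 = 1 \<longrightarrow>
          sqrt \<eta> \<le> norm2 (p z1 z2) (q z1 z2) \<and> norm2 (p z1 z2) (q z1 z2) \<le> 1))"
proof (intro exI conjI)
  define \<eta> :: real where "\<eta> = (exp (- 14400) / 12)\<^sup>2"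
  show "0 < \<eta>"
    by (simp add: \<eta>_def)
  have "exp (- 14400) \<le> (1::real)"
    by simp
  then have "exp (- 14400) / 12 \<le> (1::real)"
    by linarith
  then show "\<eta> \<le> 1"
    unfolding \<eta>_def by (intro power_le_one) auto
  have sqrt_\<eta>: "sqrt \<eta> = exp (- 14400) / 12"
    by (simp add: \<eta>_def)
  show "\<forall>k\<ge>14400. \<exists>p q. hom_poly2 k p \<and> hom_poly2 k q \<and>
      (\<forall>z1 z2. norm2 z1 z2 = 1 \<longrightarrow>
        sqrt \<eta> \<le> norm2 (p z1 z2) (q z1 z2) \<and> norm2 (p z1 z2) (q z1 z2) \<le> 1)"
    unfolding sqrt_\<eta> using exists_hom_polys_sphere_to_annulus by blast
qed

end
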